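(* Let $f(n)=\sum_{k=0}^n(-1)^k\binom nk C_k\binom{2n-2k}{n-k}$ for integers $n\ge 0$. Then for all integers $n\ge 2$, $$-16(2n+1)(n-1)^2f(n-2)-4(2n^2-1)f(n-1)+(2n-1)(n+1)^2f(n)=0.$$
   Context: $C_k=\binom{2k}{k}\frac{1}{k+1}$ denotes the $k$-th Catalan number. *)

theory Defs
  imports Complex_Main
begin

definition catalan :: "nat \<Rightarrow> rat" where
  "catalan k = of_nat ((2*k) choose k) / of_nat (k+1)"

definition f :: "nat \<Rightarrow> rat" where
  "f n = (\<Sum>k=0..n. (-1)^k * of_nat (n choose k) * catalan k * of_nat ((2*n - 2*k) choose (n-k)))"

end

theory Submission
  imports Defs
begin

text \<open>
  Creative telescoping. The summand F(n,k) of f(n) is hypergeometric in both n and k: the quotients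
  F(n,k+1)/F(n,k) and F(n-1,k)/F(n,k) are rational functions of n and k. Hence, with
  G(n,k) = R(n,k) F(n,k) for a suitable rational certificate R, the claimed recurrence operator
  applied to F(n,k) equals G(n,k+1) - G(n,k), which after division by F(n,k) is an identity of
  rational functions. Summing over k telescopes to G(n,n+1) - G(n,0) = 0.
\<close>

lemma central_binomial_fact: "fact m * fact m * (2 * m choose m) = fact (2 * m)"
  using binomial_fact_lemma[of m "2 * m"] by simp

lemma central_binomial_Suc:
  "Suc m * (2 * Suc m choose Suc m) = 2 * (2 * m + 1) * (2 * m choose m)"
proof -
  have "fact m * fact m * (Suc m * (Suc m * (2 * Suc m choose Suc m)))
      = fact (2 * Suc m)"
    by (subst central_binomial_fact[symmetric]) (simp only: fact_Suc of_nat_id mult_ac)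
  also have "\<dots> = (2 * m + 2) * (2 * m + 1) * fact (2 * m)"
    by (simp add: numeral_2_eq_2 algebra_simps)
  also have "\<dots> = fact m * fact m * (Suc m * (2 * (2 * m + 1) * (2 * m choose m)))"
    by (subst central_binomial_fact[symmetric]) (simp add: algebra_simps)
  finally show ?thesis
    by (metis fact_nonzero mult_left_cancel mult_eq_0_iff nat.distinct(1))
qed

lemma catalan_Suc: "of_nat (k + 2) * catalan (Suc k) = 2 * (2 * of_nat k + 1) * catalan k"
proof -
  have "of_nat (Suc k) * of_nat (2 * Suc k choose Suc k)
      = (2 * (2 * of_nat k + 1) * of_nat (2 * k choose k) :: rat)"
    using arg_cong[OF central_binomial_Suc[of k], of "of_nat :: nat \<Rightarrow> rat"]
    by (simp only: of_nat_mult) simp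
  then show ?thesis
    unfolding catalan_def by (simp add: field_simps del: binomial_Suc_Suc)
qed

lemma Suc_times_binomial_Suc: "Suc k * (n choose Suc k) = (n - k) * (n choose k)"
  by (simp only: binomial_absorption binomial_absorb_comp)

lemma two_mul_of_nat_diff_neq_odd:
  "2 * (of_nat n - of_nat k) \<noteq> (of_nat (2 * j + 1) :: 'a :: ring_char_0)"
proof
  assume "2 * (of_nat n - of_nat k) = (of_nat (2 * j + 1) :: 'a)"
  then have "of_int (2 * (int n - int k)) = (of_int (int (2 * j + 1)) :: 'a)"
    by simp
  then have "2 * (int n - int k) = int (2 * j + 1)"
    by (simp only: of_int_eq_iff)
  then show False
    by presburger
qed

definition f_summand :: "nat \<Rightarrow> nat \<Rightarrow> rat" where
  "f_summand n k = (-1)^k * of_nat (n choose k) * catalan k * of_nat ((2*n - 2*k) choose (n-k))"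

lemma f_summand_eq_0: "n < k \<Longrightarrow> f_summand n k = 0"
  unfolding f_summand_def by simp

lemma f_eq_sum_f_summand: "n \<le> m \<Longrightarrow> f n = (\<Sum>k=0..m. f_summand n k)"
  unfolding f_def f_summand_def[symmetric]
  by (rule sum.mono_neutral_left) (auto simp: f_summand_eq_0)

lemma f_summand_Suc_right:
  "(of_nat k + 1) * (of_nat k + 2) * (2 * (of_nat n - of_nat k) - 1) * f_summand n (Suc k)
     = - (2 * of_nat k + 1) * (of_nat n - of_nat k)^2 * f_summand n k"
proof (cases "k < n")
  case True
  then obtain m where n: "n = k + Suc m"
    using less_imp_add_positive by (metis Suc_pred add.commute)
  have diffs: "of_nat n - of_nat k = (of_nat (Suc m) :: rat)" "2 * n - 2 * Suc k = 2 * m"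
    "2 * n - 2 * k = 2 * Suc m" "n - Suc k = m" "n - k = Suc m"
    by (simp_all add: n)
  have binom: "of_nat (Suc k) * of_nat (n choose Suc k)
      = (of_nat (Suc m) * of_nat (n choose k) :: rat)"
    using arg_cong[OF Suc_times_binomial_Suc[of k n], of "of_nat :: nat \<Rightarrow> rat"]
    by (simp only: of_nat_mult diffs)
  have central: "2 * (2 * of_nat m + 1) * of_nat (2 * m choose m)
      = (of_nat (Suc m) * of_nat (2 * Suc m choose Suc m) :: rat)"
    using arg_cong[OF central_binomial_Suc[of m], of "of_nat :: nat \<Rightarrow> rat"]
    by (simp only: of_nat_mult) simp
  have "(of_nat k + 1) * (of_nat k + 2) * (2 * (of_nat n - of_nat k) - 1) * f_summand n (Suc k)
      = - ((-1)^k / 2) * (of_nat (Suc k) * of_nat (n choose Suc k))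
          * (of_nat (k + 2) * catalan (Suc k)) * (2 * (2 * of_nat m + 1) * of_nat (2 * m choose m))"
    unfolding f_summand_def diffs by (simp add: field_simps)
  also have "\<dots> = - ((-1)^k / 2) * (of_nat (Suc m) * of_nat (n choose k))
          * (2 * (2 * of_nat k + 1) * catalan k) * (of_nat (Suc m) * of_nat (2 * Suc m choose Suc m))"
    unfolding binom catalan_Suc central ..
  also have "\<dots> = - (2 * of_nat k + 1) * (of_nat n - of_nat k)^2 * f_summand n k"
    unfolding f_summand_def diffs by (simp add: field_simps power2_eq_square)
  finally show ?thesis .
next
  case False
  then show ?thesis
    by (cases "k = n") (simp_all add: f_summand_eq_0)
qed

lemma f_summand_Suc_left:
  "2 * of_nat (Suc n) * (2 * (of_nat (Suc n) - of_nat k) - 1) * f_summand n k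
     = (of_nat (Suc n) - of_nat k)^2 * f_summand (Suc n) k"
proof (cases "k \<le> n")
  case True
  then obtain m where n: "n = k + m"
    using le_Suc_ex by blast
  have diffs: "of_nat (Suc n) - of_nat k = (of_nat (Suc m) :: rat)" "2 * n - 2 * k = 2 * m"
    "2 * Suc n - 2 * k = 2 * Suc m" "n - k = m" "Suc n - k = Suc m"
    by (simp_all add: n)
  have binom: "of_nat (Suc n) * of_nat (n choose k)
      = (of_nat (Suc m) * of_nat (Suc n choose k) :: rat)"
    using arg_cong[OF binomial_absorb_comp[of "Suc n" k], of "of_nat :: nat \<Rightarrow> rat"]
    by (simp only: of_nat_mult diffs diff_Suc_1)
  have central: "2 * (2 * of_nat m + 1) * of_nat (2 * m choose m)
      = (of_nat (Suc m) * of_nat (2 * Suc m choose Suc m) :: rat)"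
    using arg_cong[OF central_binomial_Suc[of m], of "of_nat :: nat \<Rightarrow> rat"]
    by (simp only: of_nat_mult) simp
  have "2 * of_nat (Suc n) * (2 * (of_nat (Suc n) - of_nat k) - 1) * f_summand n k
      = (-1)^k * catalan k * (of_nat (Suc n) * of_nat (n choose k))
          * (2 * (2 * of_nat m + 1) * of_nat (2 * m choose m))"
    unfolding f_summand_def diffs by (simp add: field_simps)
  also have "\<dots> = (-1)^k * catalan k * (of_nat (Suc m) * of_nat (Suc n choose k))
          * (of_nat (Suc m) * of_nat (2 * Suc m choose Suc m))"
    unfolding binom central ..
  also have "\<dots> = (of_nat (Suc n) - of_nat k)^2 * f_summand (Suc n) k"
    unfolding f_summand_def diffs by (simp add: field_simps power2_eq_square)
  finally show ?thesis .
next
  case False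
  then show ?thesis
    by (cases "k = Suc n") (simp_all add: f_summand_eq_0)
qed

text \<open>The rational certificate R(n,k) delivered by Zeilberger's algorithm for this sum.\<close>
definition certificate :: "rat \<Rightarrow> rat \<Rightarrow> rat" where
  "certificate N K = K * (K + 1) *
     (K * (2*K + 1) + N * (2*K^2 - 6*K - 2) - N^2 * (4*K^2 + 6*K - 5) + 6 * N^3 * (2*K + 1) - 8 * N^4)
     / (N^2 * (2 * (N - K) - 1))"

lemma certificate_identity:
  fixes N K :: rat
  assumes "N \<noteq> 0" "N \<noteq> 1" "K + 1 \<noteq> 0" "K + 2 \<noteq> 0" "2 * (N - K) \<noteq> 1" "2 * (N - K) \<noteq> 3"
  shows "(2*N - 1) * (N + 1)^2
      - 4 * (2*N^2 - 1) * ((N - K)^2 / (2 * N * (2 * (N - K) - 1)))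
      - 16 * (2*N + 1) * (N - 1)^2 * ((N - K)^2 / (2 * N * (2 * (N - K) - 1)))
          * ((N - 1 - K)^2 / (2 * (N - 1) * (2 * (N - 1 - K) - 1)))
    = - (2*K + 1) * (N - K)^2 / ((K + 1) * (K + 2) * (2 * (N - K) - 1)) * certificate N (K + 1)
      - certificate N K"
proof -
  define a b where "a = 2 * (N - K) - 1" and "b = 2 * (N - K) - 3"
  have ab: "2 * (N - K) - 1 = a" "2 * (N - 1 - K) - 1 = b" "2 * (N - (K + 1)) - 1 = b"
    by (simp_all add: a_def b_def algebra_simps)
  have "a \<noteq> 0" "b \<noteq> 0" "N - 1 \<noteq> 0"
    using assms by (simp_all add: a_def b_def)
  with assms(1,3,4) show ?thesis
    unfolding certificate_def ab by (simp add: divide_simps) (unfold a_def b_def, algebra)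
qed

definition f_certificate :: "nat \<Rightarrow> nat \<Rightarrow> rat" where
  "f_certificate n k = certificate (of_nat n) (of_nat k) * f_summand n k"

lemma f_summand_recurrence_telescopes:
  fixes n k :: nat
  defines "N \<equiv> (of_nat n :: rat)"
  assumes "2 \<le> n"
  shows "(2*N - 1) * (N + 1)^2 * f_summand n k - 4 * (2*N^2 - 1) * f_summand (n - 1) k
      - 16 * (2*N + 1) * (N - 1)^2 * f_summand (n - 2) k
    = f_certificate n (Suc k) - f_certificate n k"
proof -
  obtain m where n: "n = Suc (Suc m)"
    using assms(2) by (metis add_2_eq_Suc le_Suc_ex)
  define K :: rat where "K = of_nat k"
  have N: "of_nat (Suc (Suc m)) = N" "of_nat (Suc m) = N - 1"
    by (simp_all add: N_def n)
  have nz: "N \<noteq> 0" "N \<noteq> 1" "K + 1 \<noteq> 0" "K + 2 \<noteq> 0"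
    using assms(2) by (simp_all add: N_def K_def)
  have odd: "2 * (N - K) \<noteq> 1" "2 * (N - K) \<noteq> 3" "2 * (N - 1 - K) \<noteq> 1"
    using two_mul_of_nat_diff_neq_odd[where 'a=rat, of n k 0]
      two_mul_of_nat_diff_neq_odd[where 'a=rat, of n k 1]
      two_mul_of_nat_diff_neq_odd[where 'a=rat, of "Suc m" k 0]
    by (simp_all add: N_def K_def algebra_simps)
  have ratio_k: "f_summand n (Suc k)
      = - (2*K + 1) * (N - K)^2 * f_summand n k / ((K + 1) * (K + 2) * (2 * (N - K) - 1))"
  proof (rule eq_divide_imp)
    show "(K + 1) * (K + 2) * (2 * (N - K) - 1) \<noteq> 0"
      using nz odd by simp
    show "f_summand n (Suc k) * ((K + 1) * (K + 2) * (2 * (N - K) - 1))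
        = - (2*K + 1) * (N - K)^2 * f_summand n k"
      using f_summand_Suc_right[of k n] by (simp add: N_def K_def mult.commute)
  qed
  have ratio_n: "f_summand (n - 1) k = (N - K)^2 * f_summand n k / (2 * N * (2 * (N - K) - 1))"
  proof (rule eq_divide_imp)
    show "2 * N * (2 * (N - K) - 1) \<noteq> 0"
      using nz odd by simp
    show "f_summand (n - 1) k * (2 * N * (2 * (N - K) - 1)) = (N - K)^2 * f_summand n k"
      using f_summand_Suc_left[of "Suc m" k] unfolding N K_def[symmetric] n
      by (simp add: mult.commute)
  qed
  have ratio_n': "f_summand (n - 2) k
      = (N - 1 - K)^2 * f_summand (n - 1) k / (2 * (N - 1) * (2 * (N - 1 - K) - 1))"
  proof (rule eq_divide_imp)
    show "2 * (N - 1) * (2 * (N - 1 - K) - 1) \<noteq> 0"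
      using nz odd by simp
    show "f_summand (n - 2) k * (2 * (N - 1) * (2 * (N - 1 - K) - 1))
        = (N - 1 - K)^2 * f_summand (n - 1) k"
      using f_summand_Suc_left[of m k] unfolding N K_def[symmetric] n
      by (simp add: mult.commute)
  qed
  show ?thesis
    using arg_cong[OF certificate_identity[OF nz odd(1,2)], of "\<lambda>x. x * f_summand n k"]
    unfolding f_certificate_def ratio_n' ratio_n ratio_k by (simp add: N_def K_def algebra_simps)
qed

theorem mainTheorem2:
  fixes n :: nat
  assumes "n \<ge> 2"
  shows "- 16 * (2 * of_nat n + 1) * (of_nat n - 1)^2 * f (n-2)
           - 4 * (2 * (of_nat n)^2 - 1) * f (n-1)
           + (2 * of_nat n - 1) * (of_nat n + 1)^2 * f n = (0::rat)"
proof -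
  define N :: rat where "N = of_nat n"
  have "(2*N - 1) * (N + 1)^2 * f n - 4 * (2*N^2 - 1) * f (n - 1)
        - 16 * (2*N + 1) * (N - 1)^2 * f (n - 2)
      = (\<Sum>k=0..n. (2*N - 1) * (N + 1)^2 * f_summand n k - 4 * (2*N^2 - 1) * f_summand (n - 1) k
          - 16 * (2*N + 1) * (N - 1)^2 * f_summand (n - 2) k)"
    unfolding sum_subtractf sum_distrib_left[symmetric]
    by (simp only: f_eq_sum_f_summand[of n n, OF order_refl]
        f_eq_sum_f_summand[of "n - 1" n, OF diff_le_self]
        f_eq_sum_f_summand[of "n - 2" n, OF diff_le_self])
  also have "\<dots> = (\<Sum>k=0..n. f_certificate n (Suc k) - f_certificate n k)"
    using f_summand_recurrence_telescopes[OF assms] by (simp add: N_def)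
  also have "\<dots> = f_certificate n (Suc n) - f_certificate n 0"
    by (rule sum_Suc_diff) simp
  also have "\<dots> = 0"
    by (simp add: f_certificate_def certificate_def f_summand_eq_0)
  finally show ?thesis
    by (simp add: N_def algebra_simps)
qed

end
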